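(* Let $\eta_1,\eta_2,\dots$ be iid with $\Pr(\eta_1\le x)=e^x$, $x\le0$. Let $d\in\mathbb{N}$, let $1\le j_1<j_2<\dots<j_d$ be integers, and set $j_0=0$. Then for all $x_1,\dots,x_d\le 0$, \[ \Pr(\eta_{j_m}\le x_m,\ 1\le m\le d\mid \eta_{j_1},\dots,\eta_{j_d}\text{ are records}) =\frac{\prod_{m=2}^d j_m}{\prod_{m=2}^d (j_m-j_{m-1})}\, \Pr\left(\frac{\eta_m}{j_m-j_{m-1}}\le x_m,\ \frac{(j_{m+1}-j_m)\eta_m}{j_m-j_{m-1}}<\eta_{m+1},\ 1\le m\le d-1,\ \frac{\eta_d}{j_d-j_{d-1}}\le x_d\right). \]
   Context: $\eta_m$ is a record if $\eta_m>\max(\eta_1,\dots,\eta_{m-1})$; $\eta_1$ is always a record. The conditioning event is the intersection of the $d$ record events. *)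

theory Defs
  imports "HOL-Probability.Probability"
begin

definition is_record :: "(nat \<Rightarrow> 'a \<Rightarrow> real) \<Rightarrow> nat \<Rightarrow> 'a \<Rightarrow> bool" where
  "is_record \<eta> m \<omega> \<longleftrightarrow> (\<forall>k\<in>{1..<m}. \<eta> k \<omega> < \<eta> m \<omega>)"

end

theory Submission
  imports Defs "HOL-Real_Asymp.Real_Asymp"
begin

text \<open>Write \<open>k m = j m - j (m - 1)\<close>. Given \<open>\<eta> 1, \<dots>, \<eta> (j D)\<close> with current record
  \<open>s = \<eta> (j D)\<close>, the next record sits at \<open>j (D + 1)\<close> and lies below \<open>y\<close> iff the \<open>k = k (D + 1)\<close>
  fresh variables attain their maximum at the last one and this maximum lies in \<open>(s, y]\<close>, which has
  probability \<open>(exp (k y) - exp (k s)) / k\<close>. Up to the factor \<open>1 / k\<close>, this is also the probability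
  that \<open>\<eta> (D + 1) / k (D + 1)\<close> lies in \<open>(s, y]\<close>. As distribution functions determine laws, induction
  on \<open>D\<close> shows that the law of \<open>\<eta> (j D)\<close> on the record event is \<open>\<Prod>m. 1 / k m\<close> times the law of
  \<open>\<eta> D / k D\<close> on the event \<open>\<eta> 1 / k 1 < \<dots> < \<eta> D / k D\<close>. The same recursion, comparing with the
  maximum of \<open>\<eta> 1, \<dots>, \<eta> (j D)\<close> (distribution function \<open>exp (j D t)\<close>), gives the probability
  \<open>\<Prod>m. 1 / j m\<close> of the record event itself.\<close>

lemma nn_integral_exp_mult_atMost:
  fixes k y :: real
  assumes k: "k > 0"
  shows "(\<integral>\<^sup>+x. ennreal (exp (k * x)) * indicator {..y} x \<partial>lborel) = ennreal (exp (k * y) / k)"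
proof -
  have "(\<integral>\<^sup>+x. ennreal (exp (k * x)) * indicator {..y} x \<partial>lborel)
      = (\<integral>\<^sup>+x. ennreal (exp (k * x)) * indicator {..y} x \<partial>(distr lborel borel uminus))"
    by (simp add: lborel_distr_uminus)
  also have "\<dots> = (\<integral>\<^sup>+x. ennreal (exp (- k * x)) * indicator {-y..} x \<partial>lborel)"
    by (subst nn_integral_distr) (auto intro!: nn_integral_cong split: split_indicator)
  also have "\<dots> = 0 - (- exp (- k * (- y)) / k)"
  proof (rule nn_integral_FTC_atLeast[where F="\<lambda>x. - exp (- k * x) / k"])
    show "((\<lambda>x. - exp (- k * x) / k) \<longlongrightarrow> 0) at_top" using k by real_asymp
  qed (use k in \<open>auto intro!: derivative_eq_intros\<close>)
  finally show ?thesis by simp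
qed

definition neg_exponential :: "real measure" where
  "neg_exponential = density lborel (\<lambda>x. ennreal (exp x) * indicator {..0} x)"

lemma nn_integral_neg_exponential:
  assumes [measurable]: "f \<in> borel_measurable borel"
  shows "(\<integral>\<^sup>+x. f x \<partial>neg_exponential) = (\<integral>\<^sup>+x. ennreal (exp x) * indicator {..0} x * f x \<partial>lborel)"
  unfolding neg_exponential_def by (subst nn_integral_density) auto

lemma emeasure_neg_exponential:
  assumes "A \<in> sets borel"
  shows "emeasure neg_exponential A = (\<integral>\<^sup>+x. ennreal (exp x) * indicator ({..0} \<inter> A) x \<partial>lborel)"
  unfolding neg_exponential_def using assms
  by (subst emeasure_density) (auto intro!: nn_integral_cong split: split_indicator)

lemma emeasure_neg_exponential_atMost: "emeasure neg_exponential {..t} = ennreal (exp (min t 0))"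
proof -
  have "{..0} \<inter> {..t} = {..min t (0::real)}" by auto
  then show ?thesis
    using nn_integral_exp_mult_atMost[of 1 "min t 0"] by (simp add: emeasure_neg_exponential)
qed

lemma emeasure_neg_exponential_lessThan: "emeasure neg_exponential {..<t} = ennreal (exp (min t 0))"
proof -
  have "emeasure neg_exponential {..<t} = emeasure neg_exponential {..t}"
    by (simp add: emeasure_neg_exponential)
      (rule nn_integral_cong_AE, use AE_lborel_singleton[of t] in eventually_elim,
       auto split: split_indicator)
  then show ?thesis by (simp add: emeasure_neg_exponential_atMost)
qed

lemma real_distribution_neg_exponential: "real_distribution neg_exponential"
proof -
  have "emeasure neg_exponential UNIV = emeasure neg_exponential {..0}"
    by (simp add: emeasure_neg_exponential)
  moreover have "space neg_exponential = UNIV" by (simp add: neg_exponential_def)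
  ultimately have "prob_space neg_exponential"
    by (intro prob_spaceI) (simp add: emeasure_neg_exponential_atMost)
  then show ?thesis
    by (simp add: real_distribution_def real_distribution_axioms_def neg_exponential_def)
qed

text \<open>Outside \<open>I\<close> the component is constantly \<open>undefined\<close> on the space of \<open>PiM I\<close>.\<close>
lemma measurable_component_any[measurable]:
  "(\<lambda>f :: 'i \<Rightarrow> 'b::topological_space. f i) \<in> borel_measurable (PiM I (\<lambda>_. borel))"
proof (cases "i \<in> I")
  case True
  then show ?thesis by (rule measurable_component_singleton)
next
  case False
  have "(\<lambda>f :: 'i \<Rightarrow> 'b. undefined :: 'b) \<in> borel_measurable (PiM I (\<lambda>_. borel))" by simp
  then show ?thesis
    by (rule measurable_cong[THEN iffD1, rotated])
      (use False in \<open>auto simp: space_PiM PiE_def extensional_def\<close>)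
qed

text \<open>\<open>exp_increment c y s = P(s < \<eta> / c \<le> y)\<close> for \<open>\<eta>\<close> with law \<open>neg_exponential\<close>,
  \<open>c > 0\<close> and \<open>y \<le> 0\<close>.\<close>
definition exp_increment :: "real \<Rightarrow> real \<Rightarrow> real \<Rightarrow> ennreal" where
  "exp_increment c y s = ennreal (if s \<le> y then exp (c * y) - exp (c * s) else 0)"

lemma measurable_exp_increment[measurable]: "exp_increment c y \<in> borel_measurable borel"
  unfolding exp_increment_def by measurable

context prob_space
begin

definition restricted_law :: "real \<Rightarrow> 'a set \<Rightarrow> ('a \<Rightarrow> real) \<Rightarrow> real measure" where
  "restricted_law c E Z = distr (density M (\<lambda>\<omega>. ennreal c * indicator E \<omega>)) borel Z"

lemma emeasure_restricted_law:
  assumes [measurable]: "Z \<in> borel_measurable M" "E \<in> events" "B \<in> sets borel"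
  shows "emeasure (restricted_law c E Z) B = ennreal c * emeasure M (E \<inter> {\<omega>\<in>space M. Z \<omega> \<in> B})"
proof -
  have "emeasure (restricted_law c E Z) B
      = (\<integral>\<^sup>+\<omega>. ennreal c * indicator E \<omega> * indicator (Z -` B \<inter> space M) \<omega> \<partial>M)"
    unfolding restricted_law_def by (simp add: emeasure_distr emeasure_density)
  also have "\<dots> = (\<integral>\<^sup>+\<omega>. ennreal c * indicator (E \<inter> {\<omega>\<in>space M. Z \<omega> \<in> B}) \<omega> \<partial>M)"
    by (intro nn_integral_cong) (auto split: split_indicator)
  finally show ?thesis by (simp add: nn_integral_cmult)
qed

lemma finite_borel_measure_restricted_law:
  assumes "Z \<in> borel_measurable M" "E \<in> events"
  shows "finite_borel_measure (restricted_law c E Z)"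
proof -
  have "space (restricted_law c E Z) = UNIV" by (simp add: restricted_law_def)
  then have "emeasure (restricted_law c E Z) (space (restricted_law c E Z)) \<noteq> \<top>"
    using assms by (simp add: emeasure_restricted_law ennreal_mult_eq_top_iff)
  then have "finite_measure (restricted_law c E Z)" by (intro finite_measureI) simp
  then show ?thesis
    by (simp add: finite_borel_measure_def finite_borel_measure_axioms_def restricted_law_def)
qed

lemma nn_integral_indicator_comp_eq_of_cdf_eq:
  fixes X Y :: "'a \<Rightarrow> real"
  assumes [measurable]: "X \<in> borel_measurable M" "Y \<in> borel_measurable M" "G \<in> events" "H \<in> events"
    "f \<in> borel_measurable borel"
    and X: "AE \<omega> in M. X \<omega> \<le> 0" and Y: "AE \<omega> in M. Y \<omega> \<le> 0"
    and cdf: "\<And>t. t \<le> 0 \<Longrightarrow> emeasure M (G \<inter> {\<omega>\<in>space M. X \<omega> \<le> t})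
                          = ennreal c * emeasure M (H \<inter> {\<omega>\<in>space M. Y \<omega> \<le> t})"
  shows "(\<integral>\<^sup>+\<omega>. indicator G \<omega> * f (X \<omega>) \<partial>M) = ennreal c * (\<integral>\<^sup>+\<omega>. indicator H \<omega> * f (Y \<omega>) \<partial>M)"
proof -
  have cdf_all: "ennreal 1 * emeasure M (G \<inter> {\<omega>\<in>space M. X \<omega> \<in> {..t}})
      = ennreal c * emeasure M (H \<inter> {\<omega>\<in>space M. Y \<omega> \<in> {..t}})" for t
  proof (cases "t \<le> 0")
    case False
    have "emeasure M (G \<inter> {\<omega>\<in>space M. X \<omega> \<le> t}) = emeasure M (G \<inter> {\<omega>\<in>space M. X \<omega> \<le> 0})"
      using X False by (intro emeasure_eq_AE) (auto elim!: eventually_mono)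
    moreover have "emeasure M (H \<inter> {\<omega>\<in>space M. Y \<omega> \<le> t}) = emeasure M (H \<inter> {\<omega>\<in>space M. Y \<omega> \<le> 0})"
      using Y False by (intro emeasure_eq_AE) (auto elim!: eventually_mono)
    ultimately show ?thesis using cdf[of 0] by simp
  qed (simp add: cdf)
  have "restricted_law 1 G X = restricted_law c H Y"
    by (rule cdf_unique')
      (use cdf_all in \<open>auto simp: finite_borel_measure_restricted_law cdf_def measure_def
         emeasure_restricted_law\<close>)
  then have "(\<integral>\<^sup>+s. f s \<partial>restricted_law 1 G X) = (\<integral>\<^sup>+s. f s \<partial>restricted_law c H Y)" by simp
  then show ?thesis
    unfolding restricted_law_def
    by (simp add: nn_integral_distr nn_integral_density nn_integral_cmult ac_simps)
qed

lemma emeasure_indep_split: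
  assumes indep: "indep_vars N X I" and AB: "A \<inter> B = {}" "A \<subseteq> I" "B \<subseteq> I"
    and P: "Measurable.pred (PiM A N \<Otimes>\<^sub>M PiM B N) (\<lambda>p. P (fst p) (snd p))"
  shows "emeasure M {\<omega>\<in>space M. P (restrict (\<lambda>i. X i \<omega>) A) (restrict (\<lambda>i. X i \<omega>) B)}
       = (\<integral>\<^sup>+\<omega>. emeasure M {\<omega>'\<in>space M. P (restrict (\<lambda>i. X i \<omega>) A) (restrict (\<lambda>i. X i \<omega>') B)} \<partial>M)"
proof -
  let ?S = "PiM A N" and ?T = "PiM B N"
  let ?XA = "\<lambda>\<omega>. restrict (\<lambda>i. X i \<omega>) A" and ?XB = "\<lambda>\<omega>. restrict (\<lambda>i. X i \<omega>) B"
  let ?Q = "{p\<in>space (?S \<Otimes>\<^sub>M ?T). P (fst p) (snd p)}"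
  have Q: "?Q \<in> sets (?S \<Otimes>\<^sub>M ?T)" using P by (simp add: pred_def)
  have "indep_var ?S ?XA ?T ?XB" by (rule indep_var_restrict[OF indep AB])
  then have XA: "random_variable ?S ?XA" and XB: "random_variable ?T ?XB"
    and joint: "distr M ?S ?XA \<Otimes>\<^sub>M distr M ?T ?XB = distr M (?S \<Otimes>\<^sub>M ?T) (\<lambda>\<omega>. (?XA \<omega>, ?XB \<omega>))"
    unfolding indep_var_distribution_eq by auto
  interpret T: prob_space "distr M ?T ?XB" using XB by (rule prob_space_distr)
  have Q': "?Q \<in> sets (N' \<Otimes>\<^sub>M distr M ?T ?XB)" if "sets N' = sets ?S" for N'
    by (subst sets_pair_measure_cong[OF that sets_distr]) (rule Q)
  have slice: "emeasure (distr M ?T ?XB) (Pair a -` ?Q) = emeasure M {\<omega>'\<in>space M. P a (?XB \<omega>')}"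
    if "a \<in> space ?S" for a
  proof -
    have "?XB -` (Pair a -` ?Q) \<inter> space M = {\<omega>'\<in>space M. P a (?XB \<omega>')}"
      using that measurable_space[OF XB] by (auto simp: space_pair_measure)
    then show ?thesis
      using XB sets_Pair1[OF Q] by (simp add: emeasure_distr)
  qed
  have "emeasure M {\<omega>\<in>space M. P (?XA \<omega>) (?XB \<omega>)} = emeasure (distr M (?S \<Otimes>\<^sub>M ?T) (\<lambda>\<omega>. (?XA \<omega>, ?XB \<omega>))) ?Q"
    using XA XB Q measurable_space[OF XA] measurable_space[OF XB]
    by (subst emeasure_distr) (auto intro!: arg_cong[where f="emeasure M"] simp: space_pair_measure)
  also have "\<dots> = (\<integral>\<^sup>+a. emeasure (distr M ?T ?XB) (Pair a -` ?Q) \<partial>distr M ?S ?XA)"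
    unfolding joint[symmetric] by (rule T.emeasure_pair_measure_alt[OF Q']) simp
  also have "\<dots> = (\<integral>\<^sup>+\<omega>. emeasure (distr M ?T ?XB) (Pair (?XA \<omega>) -` ?Q) \<partial>M)"
    using XA T.measurable_emeasure_Pair[OF Q'[OF refl]] by (subst nn_integral_distr) auto
  also have "\<dots> = (\<integral>\<^sup>+\<omega>. emeasure M {\<omega>'\<in>space M. P (?XA \<omega>) (?XB \<omega>')} \<partial>M)"
    using measurable_space[OF XA] by (intro nn_integral_cong slice) auto
  finally show ?thesis .
qed

lemma prob_all_in_indep:
  assumes indep: "indep_vars N X I" and J: "finite J" "J \<subseteq> I"
    and A: "\<And>i. i \<in> J \<Longrightarrow> A \<in> sets (N i)"
    and p: "\<And>i. i \<in> J \<Longrightarrow> prob {\<omega>\<in>space M. X i \<omega> \<in> A} = p"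
  shows "prob {\<omega>\<in>space M. \<forall>i\<in>J. X i \<omega> \<in> A} = p ^ card J"
proof (cases "J = {}")
  case True
  then show ?thesis by (simp add: prob_space)
next
  case False
  have "{\<omega>\<in>space M. \<forall>i\<in>J. X i \<omega> \<in> A} = (\<Inter>i\<in>J. X i -` A \<inter> space M)"
    using False by auto
  moreover have "prob (\<Inter>i\<in>J. X i -` A \<inter> space M) = (\<Prod>i\<in>J. prob (X i -` A \<inter> space M))"
    using False J A by (intro indep_varsD[OF indep]) auto
  moreover have "X i -` A \<inter> space M = {\<omega>\<in>space M. X i \<omega> \<in> A}" for i by auto
  ultimately show ?thesis using p by simp
qed

end

locale neg_exp_iid = prob_space M for M :: "'a measure" +
  fixes \<eta> :: "nat \<Rightarrow> 'a \<Rightarrow> real"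
  assumes rv: "\<And>i. i \<ge> 1 \<Longrightarrow> \<eta> i \<in> borel_measurable M"
    and indep: "indep_vars (\<lambda>_. borel) \<eta> {1..}"
    and cdf_eta: "\<And>i t. i \<ge> 1 \<Longrightarrow> t \<le> 0 \<Longrightarrow> measure M {\<omega> \<in> space M. \<eta> i \<omega> \<le> t} = exp t"
begin

declare rv[measurable]

lemma measurable_restrict_eta[measurable]:
  "A \<subseteq> {1..} \<Longrightarrow> (\<lambda>\<omega>. restrict (\<lambda>i. \<eta> i \<omega>) A) \<in> measurable M (PiM A (\<lambda>_. borel))"
  by (intro measurable_restrict) auto

lemma distr_eta: assumes i: "i \<ge> 1" shows "distr M borel (\<eta> i) = neg_exponential"
proof (rule cdf_unique)
  show "real_distribution (distr M borel (\<eta> i))" using i by simp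
  show "real_distribution neg_exponential" by (rule real_distribution_neg_exponential)
  show "cdf (distr M borel (\<eta> i)) = cdf neg_exponential"
  proof
    fix t :: real
    have "cdf (distr M borel (\<eta> i)) t = measure M {\<omega> \<in> space M. \<eta> i \<omega> \<le> t}"
      unfolding cdf_def using i by (subst measure_distr) (auto intro!: arg_cong[where f="measure M"])
    also have "\<dots> = exp (min t 0)"
    proof (cases "t \<le> 0")
      case False
      have "1 = measure M {\<omega> \<in> space M. \<eta> i \<omega> \<le> 0}" using cdf_eta[OF i, of 0] by simp
      also have "\<dots> \<le> measure M {\<omega> \<in> space M. \<eta> i \<omega> \<le> t}"
        using False i by (intro finite_measure_mono) auto
      finally show ?thesis using False by (simp add: antisym)
    qed (simp add: cdf_eta[OF i])
    also have "\<dots> = cdf neg_exponential t"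
      by (simp add: cdf_def measure_def emeasure_neg_exponential_atMost)
    finally show "cdf (distr M borel (\<eta> i)) t = cdf neg_exponential t" .
  qed
qed

lemma emeasure_eta:
  assumes "i \<ge> 1" "A \<in> sets borel"
  shows "emeasure M {\<omega>\<in>space M. \<eta> i \<omega> \<in> A} = emeasure neg_exponential A"
  using assms by (simp add: emeasure_distr vimage_def Int_def conj_commute flip: distr_eta)

lemma emeasure_eta_le: "i \<ge> 1 \<Longrightarrow> z \<le> 0 \<Longrightarrow> emeasure M {\<omega>\<in>space M. \<eta> i \<omega> \<le> z} = ennreal (exp z)"
  using emeasure_eta[of i "{..z}"] by (simp add: emeasure_neg_exponential_atMost)

lemma emeasure_eta_less: "i \<ge> 1 \<Longrightarrow> z \<le> 0 \<Longrightarrow> emeasure M {\<omega>\<in>space M. \<eta> i \<omega> < z} = ennreal (exp z)"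
  using emeasure_eta[of i "{..<z}"] by (simp add: emeasure_neg_exponential_lessThan)

lemma AE_eta_nonpos: "i \<ge> 1 \<Longrightarrow> AE \<omega> in M. \<eta> i \<omega> \<le> 0"
  using emeasure_eta_le[of i 0] by (subst AE_iff_emeasure_eq_1) (auto simp: Collect_conj_eq)

lemma nn_integral_exp_mult_eta:
  assumes i: "i \<ge> 1" and c: "c \<ge> 0"
  shows "(\<integral>\<^sup>+\<omega>. ennreal (exp (c * \<eta> i \<omega>)) * indicator {..y} (\<eta> i \<omega>) \<partial>M)
       = ennreal (exp ((c + 1) * min y 0) / (c + 1))"
proof -
  have "(\<integral>\<^sup>+\<omega>. ennreal (exp (c * \<eta> i \<omega>)) * indicator {..y} (\<eta> i \<omega>) \<partial>M)
      = (\<integral>\<^sup>+x. ennreal (exp (c * x)) * indicator {..y} x \<partial>neg_exponential)"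
    using i by (simp add: nn_integral_distr flip: distr_eta)
  also have "\<dots> = (\<integral>\<^sup>+x. ennreal (exp ((c + 1) * x)) * indicator {..min y 0} x \<partial>lborel)"
    by (simp add: nn_integral_neg_exponential)
      (auto intro!: nn_integral_cong split: split_indicator
        simp: ennreal_mult'[symmetric] exp_add[symmetric] algebra_simps)
  also have "\<dots> = ennreal (exp ((c + 1) * min y 0) / (c + 1))"
    using c by (intro nn_integral_exp_mult_atMost) auto
  finally show ?thesis .
qed

lemma emeasure_all_eta_in:
  assumes B: "finite B" "B \<subseteq> {1..}" and S: "S \<in> sets borel" and p: "p \<ge> 0"
    and law: "\<And>i. i \<ge> 1 \<Longrightarrow> emeasure M {\<omega>\<in>space M. \<eta> i \<omega> \<in> S} = ennreal p"
  shows "emeasure M {\<omega>\<in>space M. \<forall>i\<in>B. \<eta> i \<omega> \<in> S} = ennreal (p ^ card B)"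
proof -
  have "prob {\<omega>\<in>space M. \<eta> i \<omega> \<in> S} = p" if "i \<in> B" for i
    using law[of i] that B p S by (simp add: emeasure_eq_measure subset_iff)
  then have "prob {\<omega>\<in>space M. \<forall>i\<in>B. \<eta> i \<omega> \<in> S} = p ^ card B"
    using B S by (intro prob_all_in_indep[OF indep]) auto
  then show ?thesis by (simp add: emeasure_eq_measure)
qed

lemma emeasure_last_is_block_max:
  assumes k: "k \<ge> 1" and y: "y \<le> 0"
  shows "emeasure M {\<omega>\<in>space M. (\<forall>i\<in>{n+1..<n+k}. \<eta> i \<omega> < \<eta> (n+k) \<omega>) \<and> \<eta> (n+k) \<omega> \<le> y}
       = ennreal (exp (real k * y) / real k)"
proof -
  let ?A = "{n+k}" and ?B = "{n+1..<n+k}"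
  let ?P = "\<lambda>a b :: nat \<Rightarrow> real. (\<forall>i\<in>?B. b i < a (n+k)) \<and> a (n+k) \<le> y"
  have "emeasure M {\<omega>\<in>space M. (\<forall>i\<in>?B. \<eta> i \<omega> < \<eta> (n+k) \<omega>) \<and> \<eta> (n+k) \<omega> \<le> y}
      = emeasure M {\<omega>\<in>space M. ?P (restrict (\<lambda>i. \<eta> i \<omega>) ?A) (restrict (\<lambda>i. \<eta> i \<omega>) ?B)}"
    by (intro arg_cong[where f="emeasure M"]) auto
  also have "\<dots> = (\<integral>\<^sup>+\<omega>. emeasure M {\<omega>'\<in>space M. ?P (restrict (\<lambda>i. \<eta> i \<omega>) ?A) (restrict (\<lambda>i. \<eta> i \<omega>') ?B)} \<partial>M)"
    using k by (intro emeasure_indep_split[OF indep]) (auto, measurable)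
  also have "\<dots> = (\<integral>\<^sup>+\<omega>. ennreal (exp (real (k - 1) * \<eta> (n+k) \<omega>)) * indicator {..y} (\<eta> (n+k) \<omega>) \<partial>M)"
  proof (intro nn_integral_cong)
    fix \<omega> assume "\<omega> \<in> space M"
    show "emeasure M {\<omega>'\<in>space M. ?P (restrict (\<lambda>i. \<eta> i \<omega>) ?A) (restrict (\<lambda>i. \<eta> i \<omega>') ?B)}
        = ennreal (exp (real (k - 1) * \<eta> (n+k) \<omega>)) * indicator {..y} (\<eta> (n+k) \<omega>)"
    proof (cases "\<eta> (n+k) \<omega> \<le> y")
      case True
      have "emeasure M {\<omega>'\<in>space M. \<forall>i\<in>?B. \<eta> i \<omega>' \<in> {..<\<eta> (n+k) \<omega>}}
          = ennreal (exp (\<eta> (n+k) \<omega>) ^ card ?B)"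
        using True y by (intro emeasure_all_eta_in) (auto simp: emeasure_eta_less)
      then show ?thesis
        using True k by (simp add: exp_of_nat_mult[symmetric])
    qed simp
  qed
  also have "\<dots> = ennreal (exp ((real (k - 1) + 1) * y) / (real (k - 1) + 1))"
    using k y by (subst nn_integral_exp_mult_eta) auto
  also have "\<dots> = ennreal (exp (real k * y) / real k)" using k by (simp add: of_nat_diff)
  finally show ?thesis by simp
qed

lemma emeasure_last_is_block_max_between:
  assumes k: "k \<ge> 1" and y: "y \<le> 0"
  shows "emeasure M {\<omega>\<in>space M. \<sigma> < \<eta> (n+k) \<omega> \<and> (\<forall>i\<in>{n+1..<n+k}. \<eta> i \<omega> < \<eta> (n+k) \<omega>) \<and> \<eta> (n+k) \<omega> \<le> y}
       = ennreal (1 / real k) * exp_increment (real k) y \<sigma>"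
proof (cases "\<sigma> \<le> y")
  case True
  let ?B = "\<lambda>t. {\<omega>\<in>space M. (\<forall>i\<in>{n+1..<n+k}. \<eta> i \<omega> < \<eta> (n+k) \<omega>) \<and> \<eta> (n+k) \<omega> \<le> t}"
  have "{\<omega>\<in>space M. \<sigma> < \<eta> (n+k) \<omega> \<and> (\<forall>i\<in>{n+1..<n+k}. \<eta> i \<omega> < \<eta> (n+k) \<omega>) \<and> \<eta> (n+k) \<omega> \<le> y}
      = ?B y - ?B \<sigma>"
    by auto
  moreover have "emeasure M (?B y - ?B \<sigma>) = emeasure M (?B y) - emeasure M (?B \<sigma>)"
    using True k by (intro emeasure_Diff) auto
  moreover have "emeasure M (?B t) = ennreal (exp (real k * t) / real k)" if "t \<le> 0" for t
    using k that by (rule emeasure_last_is_block_max)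
  ultimately show ?thesis
    using True k y
    by (simp add: exp_increment_def ennreal_minus diff_divide_distrib ennreal_mult'[symmetric])
next
  case False
  then have "{\<omega>\<in>space M. \<sigma> < \<eta> (n+k) \<omega> \<and> (\<forall>i\<in>{n+1..<n+k}. \<eta> i \<omega> < \<eta> (n+k) \<omega>) \<and> \<eta> (n+k) \<omega> \<le> y} = {}"
    by auto
  then show ?thesis using False by (simp only: emeasure_empty) (simp add: exp_increment_def)
qed

lemma emeasure_scaled_eta_between:
  assumes i: "i \<ge> 1" and c: "c > 0" and y: "y \<le> 0"
  shows "emeasure M {\<omega>\<in>space M. \<sigma> < \<eta> i \<omega> / c \<and> \<eta> i \<omega> / c \<le> y} = exp_increment c y \<sigma>"
proof (cases "\<sigma> \<le> y")
  case True
  let ?B = "\<lambda>t. {\<omega>\<in>space M. \<eta> i \<omega> \<le> c * t}"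
  have "{\<omega>\<in>space M. \<sigma> < \<eta> i \<omega> / c \<and> \<eta> i \<omega> / c \<le> y} = ?B y - ?B \<sigma>"
    using c by (auto simp: field_simps)
  moreover have "emeasure M (?B y - ?B \<sigma>) = emeasure M (?B y) - emeasure M (?B \<sigma>)"
    using True c i by (intro emeasure_Diff) (auto intro: order_trans mult_left_mono)
  ultimately show ?thesis
    using True c i y
    by (simp add: emeasure_eta_le mult_nonneg_nonpos exp_increment_def ennreal_minus)
next
  case False
  then have "{\<omega>\<in>space M. \<sigma> < \<eta> i \<omega> / c \<and> \<eta> i \<omega> / c \<le> y} = {}" by auto
  then show ?thesis using False by (simp only: emeasure_empty) (simp add: exp_increment_def)
qed

lemma emeasure_condition_on_past:
  assumes B: "B \<subseteq> {n<..}"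
    and [measurable]: "Measurable.pred (PiM {1..n} (\<lambda>_. borel)) E"
    and \<Phi>: "Measurable.pred (PiM {1..n} (\<lambda>_. borel) \<Otimes>\<^sub>M PiM B (\<lambda>_. borel)) (\<lambda>p. \<Phi> (fst p) (snd p))"
  shows "emeasure M {\<omega>\<in>space M. E (restrict (\<lambda>i. \<eta> i \<omega>) {1..n})
             \<and> \<Phi> (restrict (\<lambda>i. \<eta> i \<omega>) {1..n}) (restrict (\<lambda>i. \<eta> i \<omega>) B)}
       = (\<integral>\<^sup>+\<omega>. indicator {\<omega>\<in>space M. E (restrict (\<lambda>i. \<eta> i \<omega>) {1..n})} \<omega>
             * emeasure M {\<omega>'\<in>space M. \<Phi> (restrict (\<lambda>i. \<eta> i \<omega>) {1..n}) (restrict (\<lambda>i. \<eta> i \<omega>') B)} \<partial>M)"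
proof -
  have "Measurable.pred (PiM {1..n} (\<lambda>_. borel) \<Otimes>\<^sub>M PiM B (\<lambda>_. borel)) (\<lambda>p. E (fst p) \<and> \<Phi> (fst p) (snd p))"
    using \<Phi> by measurable
  then have "emeasure M {\<omega>\<in>space M. E (restrict (\<lambda>i. \<eta> i \<omega>) {1..n})
             \<and> \<Phi> (restrict (\<lambda>i. \<eta> i \<omega>) {1..n}) (restrict (\<lambda>i. \<eta> i \<omega>) B)}
      = (\<integral>\<^sup>+\<omega>. emeasure M {\<omega>'\<in>space M. E (restrict (\<lambda>i. \<eta> i \<omega>) {1..n})
             \<and> \<Phi> (restrict (\<lambda>i. \<eta> i \<omega>) {1..n}) (restrict (\<lambda>i. \<eta> i \<omega>') B)} \<partial>M)"
    using B by (intro emeasure_indep_split[OF indep]) auto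
  also have "\<dots> = (\<integral>\<^sup>+\<omega>. indicator {\<omega>\<in>space M. E (restrict (\<lambda>i. \<eta> i \<omega>) {1..n})} \<omega>
             * emeasure M {\<omega>'\<in>space M. \<Phi> (restrict (\<lambda>i. \<eta> i \<omega>) {1..n}) (restrict (\<lambda>i. \<eta> i \<omega>') B)} \<partial>M)"
    by (intro nn_integral_cong) (simp split: split_indicator)
  finally show ?thesis .
qed

lemma emeasure_extend_by_block_max:
  assumes K: "K \<ge> 1" and y: "y \<le> 0"
    and E[measurable]: "Measurable.pred (PiM {1..n} (\<lambda>_. borel)) E"
    and [measurable]: "s \<in> borel_measurable (PiM {1..n} (\<lambda>_. borel))"
  shows "emeasure M {\<omega>\<in>space M. E (restrict (\<lambda>i. \<eta> i \<omega>) {1..n})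
             \<and> s (restrict (\<lambda>i. \<eta> i \<omega>) {1..n}) < \<eta> (n+K) \<omega>
             \<and> (\<forall>i\<in>{n+1..<n+K}. \<eta> i \<omega> < \<eta> (n+K) \<omega>) \<and> \<eta> (n+K) \<omega> \<le> y}
       = ennreal (1 / real K) * (\<integral>\<^sup>+\<omega>. indicator {\<omega>\<in>space M. E (restrict (\<lambda>i. \<eta> i \<omega>) {1..n})} \<omega>
             * exp_increment (real K) y (s (restrict (\<lambda>i. \<eta> i \<omega>) {1..n})) \<partial>M)"
proof -
  let ?v = "\<lambda>\<omega>. restrict (\<lambda>i. \<eta> i \<omega>) {1..n}" and ?B = "{n+1..n+K}"
  let ?\<Phi> = "\<lambda>a b :: nat \<Rightarrow> real. s a < b (n+K) \<and> (\<forall>i\<in>{n+1..<n+K}. b i < b (n+K)) \<and> b (n+K) \<le> y"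
  have \<Phi>: "Measurable.pred (PiM {1..n} (\<lambda>_. borel) \<Otimes>\<^sub>M PiM ?B (\<lambda>_. borel)) (\<lambda>p. ?\<Phi> (fst p) (snd p))"
    by measurable
  have "emeasure M {\<omega>\<in>space M. E (?v \<omega>) \<and> ?\<Phi> (?v \<omega>) (restrict (\<lambda>i. \<eta> i \<omega>) ?B)}
      = (\<integral>\<^sup>+\<omega>. indicator {\<omega>\<in>space M. E (?v \<omega>)} \<omega>
           * emeasure M {\<omega>'\<in>space M. ?\<Phi> (?v \<omega>) (restrict (\<lambda>i. \<eta> i \<omega>') ?B)} \<partial>M)"
    by (rule emeasure_condition_on_past[OF _ E \<Phi>]) auto
  also have "\<dots> = (\<integral>\<^sup>+\<omega>. ennreal (1 / real K) * (indicator {\<omega>\<in>space M. E (?v \<omega>)} \<omega>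
           * exp_increment (real K) y (s (?v \<omega>))) \<partial>M)"
  proof (intro nn_integral_cong)
    fix \<omega>
    have "{\<omega>'\<in>space M. ?\<Phi> (?v \<omega>) (restrict (\<lambda>i. \<eta> i \<omega>') ?B)}
        = {\<omega>'\<in>space M. s (?v \<omega>) < \<eta> (n+K) \<omega>' \<and> (\<forall>i\<in>{n+1..<n+K}. \<eta> i \<omega>' < \<eta> (n+K) \<omega>')
            \<and> \<eta> (n+K) \<omega>' \<le> y}"
      using K by auto
    then show "indicator {\<omega>\<in>space M. E (?v \<omega>)} \<omega> * emeasure M {\<omega>'\<in>space M. ?\<Phi> (?v \<omega>) (restrict (\<lambda>i. \<eta> i \<omega>') ?B)}
        = ennreal (1 / real K) * (indicator {\<omega>\<in>space M. E (?v \<omega>)} \<omega> * exp_increment (real K) y (s (?v \<omega>)))"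
      by (simp only: emeasure_last_is_block_max_between[OF K y] mult.left_commute)
  qed
  also have "\<dots> = ennreal (1 / real K) * (\<integral>\<^sup>+\<omega>. indicator {\<omega>\<in>space M. E (?v \<omega>)} \<omega>
           * exp_increment (real K) y (s (?v \<omega>)) \<partial>M)"
    by (rule nn_integral_cmult) measurable
  finally show ?thesis
    using K by (simp add: conj_commute cong: conj_cong)
qed

lemma emeasure_extend_by_scaled_eta:
  assumes c: "c > 0" and y: "y \<le> 0"
    and E[measurable]: "Measurable.pred (PiM {1..n} (\<lambda>_. borel)) E"
    and [measurable]: "s \<in> borel_measurable (PiM {1..n} (\<lambda>_. borel))"
  shows "emeasure M {\<omega>\<in>space M. E (restrict (\<lambda>i. \<eta> i \<omega>) {1..n})
             \<and> s (restrict (\<lambda>i. \<eta> i \<omega>) {1..n}) < \<eta> (n+1) \<omega> / c \<and> \<eta> (n+1) \<omega> / c \<le> y}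
       = (\<integral>\<^sup>+\<omega>. indicator {\<omega>\<in>space M. E (restrict (\<lambda>i. \<eta> i \<omega>) {1..n})} \<omega>
             * exp_increment c y (s (restrict (\<lambda>i. \<eta> i \<omega>) {1..n})) \<partial>M)"
proof -
  let ?v = "\<lambda>\<omega>. restrict (\<lambda>i. \<eta> i \<omega>) {1..n}"
  let ?\<Phi> = "\<lambda>a b :: nat \<Rightarrow> real. s a < b (n+1) / c \<and> b (n+1) / c \<le> y"
  have \<Phi>: "Measurable.pred (PiM {1..n} (\<lambda>_. borel) \<Otimes>\<^sub>M PiM {n+1} (\<lambda>_. borel)) (\<lambda>p. ?\<Phi> (fst p) (snd p))"
    by measurable
  have "emeasure M {\<omega>\<in>space M. E (?v \<omega>) \<and> ?\<Phi> (?v \<omega>) (restrict (\<lambda>i. \<eta> i \<omega>) {n+1})}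
      = (\<integral>\<^sup>+\<omega>. indicator {\<omega>\<in>space M. E (?v \<omega>)} \<omega>
           * emeasure M {\<omega>'\<in>space M. ?\<Phi> (?v \<omega>) (restrict (\<lambda>i. \<eta> i \<omega>') {n+1})} \<partial>M)"
    by (rule emeasure_condition_on_past[OF _ E \<Phi>]) auto
  also have "\<dots> = (\<integral>\<^sup>+\<omega>. indicator {\<omega>\<in>space M. E (?v \<omega>)} \<omega> * exp_increment c y (s (?v \<omega>)) \<partial>M)"
  proof (intro nn_integral_cong)
    fix \<omega>
    have "{\<omega>'\<in>space M. ?\<Phi> (?v \<omega>) (restrict (\<lambda>i. \<eta> i \<omega>') {n+1})}
        = {\<omega>'\<in>space M. s (?v \<omega>) < \<eta> (n+1) \<omega>' / c \<and> \<eta> (n+1) \<omega>' / c \<le> y}"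
      by auto
    then show "indicator {\<omega>\<in>space M. E (?v \<omega>)} \<omega> * emeasure M {\<omega>'\<in>space M. ?\<Phi> (?v \<omega>) (restrict (\<lambda>i. \<eta> i \<omega>') {n+1})}
        = indicator {\<omega>\<in>space M. E (?v \<omega>)} \<omega> * exp_increment c y (s (?v \<omega>))"
      using emeasure_scaled_eta_between[of "n+1" c y] c y by simp
  qed
  finally show ?thesis by simp
qed

lemma emeasure_Max_eta_le:
  assumes n: "n \<ge> 1" and s: "s \<le> 0"
  shows "emeasure M {\<omega>\<in>space M. Max ((\<lambda>i. \<eta> i \<omega>) ` {1..n}) \<le> s} = ennreal (exp (real n * s))"
  using emeasure_all_eta_in[of "{1..n}" "{..s}" "exp s"] n s
  by (simp add: Max_le_iff emeasure_eta_le exp_of_nat_mult)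

lemma nn_integral_increment_Max_eta:
  assumes n: "n \<ge> 1" and K: "K \<ge> 1" and t: "t \<le> 0"
  shows "ennreal (1 / real K) * (\<integral>\<^sup>+\<omega>. exp_increment (real K) t (Max ((\<lambda>i. \<eta> i \<omega>) ` {1..n})) \<partial>M)
       = ennreal (exp (real (n + K) * t) / real (n + K))"
proof -
  have restrict_Max: "Max (restrict (\<lambda>i. \<eta> i \<omega>) {1..n} ` {1..n}) = Max ((\<lambda>i. \<eta> i \<omega>) ` {1..n})" for \<omega>
    by (intro arg_cong[where f=Max] image_cong) auto
  have "ennreal (1 / real K) * (\<integral>\<^sup>+\<omega>. exp_increment (real K) t (Max ((\<lambda>i. \<eta> i \<omega>) ` {1..n})) \<partial>M)
      = ennreal (1 / real K) * (\<integral>\<^sup>+\<omega>. indicator {\<omega>\<in>space M. True} \<omega>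
          * exp_increment (real K) t (Max (restrict (\<lambda>i. \<eta> i \<omega>) {1..n} ` {1..n})) \<partial>M)"
    by (intro arg_cong2[where f="(*)"] nn_integral_cong) (simp_all add: restrict_Max)
  also have "\<dots> = emeasure M {\<omega>\<in>space M. True \<and> Max (restrict (\<lambda>i. \<eta> i \<omega>) {1..n} ` {1..n}) < \<eta> (n+K) \<omega>
           \<and> (\<forall>i\<in>{n+1..<n+K}. \<eta> i \<omega> < \<eta> (n+K) \<omega>) \<and> \<eta> (n+K) \<omega> \<le> t}"
    by (rule emeasure_extend_by_block_max[OF K t, where E="\<lambda>_. True" and s="\<lambda>a. Max (a ` {1..n})",
          symmetric]) measurable
  also have "{\<omega>\<in>space M. True \<and> Max (restrict (\<lambda>i. \<eta> i \<omega>) {1..n} ` {1..n}) < \<eta> (n+K) \<omega>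
           \<and> (\<forall>i\<in>{n+1..<n+K}. \<eta> i \<omega> < \<eta> (n+K) \<omega>) \<and> \<eta> (n+K) \<omega> \<le> t}
      = {\<omega>\<in>space M. (\<forall>i\<in>{0+1..<0+(n+K)}. \<eta> i \<omega> < \<eta> (0+(n+K)) \<omega>) \<and> \<eta> (0+(n+K)) \<omega> \<le> t}"
    using n K by (auto simp: restrict_Max Max_less_iff)
  also have "emeasure M \<dots> = ennreal (exp (real (n + K) * t) / real (n + K))"
    using K t by (intro emeasure_last_is_block_max) auto
  finally show ?thesis .
qed

text \<open>The restricted law of \<open>X\<close> on \<open>G\<close> is \<open>c\<close> times the law of \<open>max (\<eta> 1, \<dots>, \<eta> n)\<close>.\<close>
lemma nn_integral_increment_of_exp_cdf:
  fixes X :: "'a \<Rightarrow> real"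
  assumes [measurable]: "X \<in> borel_measurable M" "G \<in> events" and X: "AE \<omega> in M. X \<omega> \<le> 0"
    and n: "n \<ge> 1" and K: "K \<ge> 1" and t: "t \<le> 0" and c: "c \<ge> 0"
    and cdf: "\<And>s. s \<le> 0 \<Longrightarrow> emeasure M (G \<inter> {\<omega>\<in>space M. X \<omega> \<le> s}) = ennreal (c * exp (real n * s))"
  shows "ennreal (1 / real K) * (\<integral>\<^sup>+\<omega>. indicator G \<omega> * exp_increment (real K) t (X \<omega>) \<partial>M)
       = ennreal (c * exp (real (n + K) * t) / real (n + K))"
proof -
  let ?Mx = "\<lambda>\<omega>. Max ((\<lambda>i. \<eta> i \<omega>) ` {1..n})"
  have "AE \<omega> in M. \<forall>i\<in>{1..n}. \<eta> i \<omega> \<le> 0" by (intro AE_finite_allI AE_eta_nonpos) auto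
  then have Mx_nonpos: "AE \<omega> in M. ?Mx \<omega> \<le> 0"
    by eventually_elim (use n in \<open>simp add: Max_le_iff\<close>)
  have [measurable]: "?Mx \<in> borel_measurable M" by measurable
  have "(\<integral>\<^sup>+\<omega>. indicator G \<omega> * exp_increment (real K) t (X \<omega>) \<partial>M)
      = ennreal c * (\<integral>\<^sup>+\<omega>. indicator (space M) \<omega> * exp_increment (real K) t (?Mx \<omega>) \<partial>M)"
  proof (rule nn_integral_indicator_comp_eq_of_cdf_eq)
    fix s :: real assume s: "s \<le> 0"
    have "space M \<inter> {\<omega>\<in>space M. ?Mx \<omega> \<le> s} = {\<omega>\<in>space M. ?Mx \<omega> \<le> s}" by auto
    then show "emeasure M (G \<inter> {\<omega>\<in>space M. X \<omega> \<le> s})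
        = ennreal c * emeasure M (space M \<inter> {\<omega>\<in>space M. ?Mx \<omega> \<le> s})"
      using cdf[OF s] emeasure_Max_eta_le[OF n s] c by (simp add: ennreal_mult)
  qed (use c X Mx_nonpos in auto)
  also have "\<dots> = ennreal c * (\<integral>\<^sup>+\<omega>. exp_increment (real K) t (?Mx \<omega>) \<partial>M)"
    by (intro arg_cong2[where f="(*)"] nn_integral_cong) simp_all
  finally show ?thesis
    using nn_integral_increment_Max_eta[OF n K t] c
    by (simp add: mult.left_commute[of "ennreal (1 / real K)"] ennreal_mult'[symmetric])
qed

end

locale neg_exp_records = neg_exp_iid M \<eta> for M :: "'a measure" and \<eta> +
  fixes d :: nat and j :: "nat \<Rightarrow> nat"
  assumes d: "d \<ge> 1" and j0: "j 0 = 0" and j_mono: "strict_mono_on {0..d} j"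
begin

lemma j_less: "m < m' \<Longrightarrow> m' \<le> d \<Longrightarrow> j m < j m'"
  using j_mono by (auto intro: strict_mono_onD)

lemma j_le: "m \<le> m' \<Longrightarrow> m' \<le> d \<Longrightarrow> j m \<le> j m'"
  using j_less[of m m'] by (cases "m = m'") auto

lemma j_pos: "1 \<le> m \<Longrightarrow> m \<le> d \<Longrightarrow> 1 \<le> j m"
  using j_less[of 0 m] j0 by auto

definition gap :: "nat \<Rightarrow> nat" where "gap m = j m - j (m - 1)"

lemma gap_pos: "1 \<le> m \<Longrightarrow> m \<le> d \<Longrightarrow> 1 \<le> gap m"
  using j_less[of "m - 1" m] unfolding gap_def by auto

lemma j_eq_add_gap: "1 \<le> m \<Longrightarrow> m \<le> d \<Longrightarrow> j m = j (m - 1) + gap m"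
  using j_less[of "m - 1" m] unfolding gap_def by auto

definition records_below :: "(nat \<Rightarrow> real) \<Rightarrow> nat \<Rightarrow> (nat \<Rightarrow> real) \<Rightarrow> bool" where
  "records_below b D a \<longleftrightarrow> (\<forall>m\<in>{1..D}. (\<forall>i\<in>{1..<j m}. a i < a (j m)) \<and> a (j m) \<le> b m)"

definition gap_chain :: "(nat \<Rightarrow> real) \<Rightarrow> nat \<Rightarrow> (nat \<Rightarrow> real) \<Rightarrow> bool" where
  "gap_chain b D a \<longleftrightarrow>
     (\<forall>m\<in>{1..<D}. a m / gap m \<le> b m \<and> a m / gap m < a (Suc m) / gap (Suc m)) \<and> a D / gap D \<le> b D"

lemma measurable_records_below[measurable]:
  "Measurable.pred (PiM I (\<lambda>_. borel)) (records_below b D)"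
  unfolding records_below_def by measurable

lemma measurable_gap_chain[measurable]: "Measurable.pred (PiM I (\<lambda>_. borel)) (gap_chain b D)"
  unfolding gap_chain_def by measurable

lemma records_below_restrict:
  assumes "D \<le> d"
  shows "records_below b D (restrict a {1..j D}) \<longleftrightarrow> records_below b D a"
proof -
  have "1 \<le> j m \<and> j m \<le> j D" if "m \<in> {1..D}" for m using that assms j_le j_pos by auto
  then show ?thesis unfolding records_below_def by (intro ball_cong refl) fastforce
qed

lemma gap_chain_restrict: "1 \<le> D \<Longrightarrow> gap_chain b D (restrict a {1..D}) \<longleftrightarrow> gap_chain b D a"
  unfolding gap_chain_def by auto

lemma sets_records_below[measurable]: "D \<le> d \<Longrightarrow> {\<omega>\<in>space M. records_below b D (\<lambda>i. \<eta> i \<omega>)} \<in> events"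
  by (subst records_below_restrict[symmetric]) measurable

lemma sets_gap_chain[measurable]: "1 \<le> D \<Longrightarrow> {\<omega>\<in>space M. gap_chain b D (\<lambda>i. \<eta> i \<omega>)} \<in> events"
  by (subst gap_chain_restrict[symmetric]) measurable

lemma records_below_Suc:
  assumes D: "1 \<le> D" "Suc D \<le> d"
  shows "records_below b (Suc D) a \<longleftrightarrow> records_below b D a \<and> a (j D) < a (j (Suc D))
    \<and> (\<forall>i\<in>{j D+1..<j (Suc D)}. a i < a (j (Suc D))) \<and> a (j (Suc D)) \<le> b (Suc D)"
proof -
  have split: "{1..Suc D} = insert (Suc D) {1..D}" by auto
  have "j D < j (Suc D)" "1 \<le> j D" using j_less[of D "Suc D"] j_pos[of D] D by auto
  then have "(\<forall>i\<in>{1..<j (Suc D)}. a i < a (j (Suc D))) \<longleftrightarrow>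
      (\<forall>i\<in>{1..<j D}. a i < a (j (Suc D))) \<and> a (j D) < a (j (Suc D))
      \<and> (\<forall>i\<in>{j D+1..<j (Suc D)}. a i < a (j (Suc D)))"
    by (auto, metis atLeastLessThan_iff linorder_neqE_nat not_le not_less_eq_eq)
  moreover have "(\<forall>i\<in>{1..<j D}. a i < a (j D)) \<Longrightarrow> a (j D) < a (j (Suc D))
      \<Longrightarrow> (\<forall>i\<in>{1..<j D}. a i < a (j (Suc D)))"
    by (auto intro: less_trans)
  ultimately show ?thesis
    unfolding records_below_def split using D by auto
qed

lemma gap_chain_Suc:
  "1 \<le> D \<Longrightarrow> gap_chain b (Suc D) a \<longleftrightarrow> gap_chain b D a
     \<and> a D / gap D < a (Suc D) / gap (Suc D) \<and> a (Suc D) / gap (Suc D) \<le> b (Suc D)"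
  unfolding gap_chain_def by (auto simp: less_Suc_eq)

lemma records_below_update_last:
  "1 \<le> D \<Longrightarrow> records_below (b(D := min (b D) t)) D a \<longleftrightarrow> records_below b D a \<and> a (j D) \<le> t"
  unfolding records_below_def by auto

lemma gap_chain_update_last:
  "gap_chain (b(D := min (b D) t)) D a \<longleftrightarrow> gap_chain b D a \<and> a D / gap D \<le> t"
  unfolding gap_chain_def by auto

lemma records_below_cong:
  "(\<And>m. m \<in> {1..D} \<Longrightarrow> b m = b' m) \<Longrightarrow> records_below b D = records_below b' D"
  unfolding records_below_def by (auto intro!: ext)

lemma emeasure_records_below_Suc:
  assumes D: "1 \<le> D" "Suc D \<le> d" and b: "b (Suc D) \<le> 0"
  shows "emeasure M {\<omega>\<in>space M. records_below b (Suc D) (\<lambda>i. \<eta> i \<omega>)}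
       = ennreal (1 / real (gap (Suc D))) * (\<integral>\<^sup>+\<omega>. indicator {\<omega>\<in>space M. records_below b D (\<lambda>i. \<eta> i \<omega>)} \<omega>
           * exp_increment (real (gap (Suc D))) (b (Suc D)) (\<eta> (j D) \<omega>) \<partial>M)"
proof -
  define n K where "n = j D" and "K = gap (Suc D)"
  have K: "1 \<le> K" and n: "1 \<le> n" and nK: "j (Suc D) = n + K"
    using gap_pos[of "Suc D"] j_pos[of D] j_eq_add_gap[of "Suc D"] D by (auto simp: n_def K_def)
  let ?v = "\<lambda>\<omega>. restrict (\<lambda>i. \<eta> i \<omega>) {1..n}"
  have past: "records_below b D (?v \<omega>) \<longleftrightarrow> records_below b D (\<lambda>i. \<eta> i \<omega>)" for \<omega>
    using records_below_restrict[of D b] D by (simp add: n_def)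
  have "records_below b (Suc D) (\<lambda>i. \<eta> i \<omega>) \<longleftrightarrow> records_below b D (?v \<omega>) \<and> ?v \<omega> n < \<eta> (n+K) \<omega>
           \<and> (\<forall>i\<in>{n+1..<n+K}. \<eta> i \<omega> < \<eta> (n+K) \<omega>) \<and> \<eta> (n+K) \<omega> \<le> b (Suc D)" for \<omega>
    unfolding past records_below_Suc[OF D] nK using n by (simp add: n_def)
  then have "emeasure M {\<omega>\<in>space M. records_below b (Suc D) (\<lambda>i. \<eta> i \<omega>)}
      = ennreal (1 / real K) * (\<integral>\<^sup>+\<omega>. indicator {\<omega>\<in>space M. records_below b D (?v \<omega>)} \<omega>
           * exp_increment (real K) (b (Suc D)) (?v \<omega> n) \<partial>M)"
    by (simp only:) (rule emeasure_extend_by_block_max[OF K b, where s="\<lambda>a. a n"]; measurable)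
  then show ?thesis
    unfolding past using n by (simp add: K_def n_def)
qed

lemma emeasure_gap_chain_Suc:
  assumes D: "1 \<le> D" "Suc D \<le> d" and b: "b (Suc D) \<le> 0"
  shows "emeasure M {\<omega>\<in>space M. gap_chain b (Suc D) (\<lambda>i. \<eta> i \<omega>)}
       = (\<integral>\<^sup>+\<omega>. indicator {\<omega>\<in>space M. gap_chain b D (\<lambda>i. \<eta> i \<omega>)} \<omega>
           * exp_increment (real (gap (Suc D))) (b (Suc D)) (\<eta> D \<omega> / real (gap D)) \<partial>M)"
proof -
  let ?v = "\<lambda>\<omega>. restrict (\<lambda>i. \<eta> i \<omega>) {1..D}"
  have K: "real (gap (Suc D)) > 0" using gap_pos[of "Suc D"] D by simp
  have past: "gap_chain b D (?v \<omega>) \<longleftrightarrow> gap_chain b D (\<lambda>i. \<eta> i \<omega>)" for \<omega>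
    using gap_chain_restrict[of D b] D by simp
  have "gap_chain b (Suc D) (\<lambda>i. \<eta> i \<omega>) \<longleftrightarrow> gap_chain b D (?v \<omega>)
           \<and> ?v \<omega> D / real (gap D) < \<eta> (D+1) \<omega> / real (gap (Suc D))
           \<and> \<eta> (D+1) \<omega> / real (gap (Suc D)) \<le> b (Suc D)" for \<omega>
    unfolding past gap_chain_Suc[OF D(1)] using D by simp
  then have "emeasure M {\<omega>\<in>space M. gap_chain b (Suc D) (\<lambda>i. \<eta> i \<omega>)}
      = (\<integral>\<^sup>+\<omega>. indicator {\<omega>\<in>space M. gap_chain b D (?v \<omega>)} \<omega>
           * exp_increment (real (gap (Suc D))) (b (Suc D)) (?v \<omega> D / real (gap D)) \<partial>M)"
    by (simp only:) (rule emeasure_extend_by_scaled_eta[OF K b, where s="\<lambda>a. a D / real (gap D)"]; measurable)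
  then show ?thesis
    unfolding past using D by simp
qed

lemma AE_eta_j_nonpos: "1 \<le> m \<Longrightarrow> m \<le> d \<Longrightarrow> AE \<omega> in M. \<eta> (j m) \<omega> \<le> 0"
  using j_pos by (intro AE_eta_nonpos) auto

lemma emeasure_records_below_1:
  assumes "b 1 \<le> 0"
  shows "emeasure M {\<omega>\<in>space M. records_below b 1 (\<lambda>i. \<eta> i \<omega>)}
       = ennreal (exp (real (j 1) * b 1) / real (j 1))"
proof -
  have "{\<omega>\<in>space M. records_below b 1 (\<lambda>i. \<eta> i \<omega>)}
      = {\<omega>\<in>space M. (\<forall>i\<in>{0+1..<0+j 1}. \<eta> i \<omega> < \<eta> (0+j 1) \<omega>) \<and> \<eta> (0+j 1) \<omega> \<le> b 1}"
    by (simp add: records_below_def)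
  then show ?thesis
    using emeasure_last_is_block_max[of "j 1" "b 1" 0] j_pos[of 1] d assms by simp
qed

lemma emeasure_gap_chain_1:
  assumes "b 1 \<le> 0"
  shows "emeasure M {\<omega>\<in>space M. gap_chain b 1 (\<lambda>i. \<eta> i \<omega>)} = ennreal (exp (real (j 1) * b 1))"
proof -
  have "gap 1 = j 1" "1 \<le> j 1" using j_pos[of 1] d j0 by (auto simp: gap_def)
  then have "{\<omega>\<in>space M. gap_chain b 1 (\<lambda>i. \<eta> i \<omega>)} = {\<omega>\<in>space M. \<eta> 1 \<omega> \<le> real (j 1) * b 1}"
    unfolding gap_chain_def by (auto simp: pos_divide_le_eq mult.commute)
  then show ?thesis
    using assms by (simp add: emeasure_eta_le mult_nonneg_nonpos)
qed

lemma emeasure_records_below_Suc_eq_gap_chain_Suc: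
  assumes D: "1 \<le> D" "Suc D \<le> d" and b: "b (Suc D) \<le> 0" and c: "c \<ge> 0"
    and cdf: "\<And>t. t \<le> 0 \<Longrightarrow>
      emeasure M ({\<omega>\<in>space M. records_below b D (\<lambda>i. \<eta> i \<omega>)} \<inter> {\<omega>\<in>space M. \<eta> (j D) \<omega> \<le> t})
        = ennreal c * emeasure M ({\<omega>\<in>space M. gap_chain b D (\<lambda>i. \<eta> i \<omega>)}
            \<inter> {\<omega>\<in>space M. \<eta> D \<omega> / real (gap D) \<le> t})"
  shows "emeasure M {\<omega>\<in>space M. records_below b (Suc D) (\<lambda>i. \<eta> i \<omega>)}
       = ennreal (c / real (gap (Suc D))) * emeasure M {\<omega>\<in>space M. gap_chain b (Suc D) (\<lambda>i. \<eta> i \<omega>)}"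
proof -
  let ?\<psi> = "exp_increment (real (gap (Suc D))) (b (Suc D))"
  have [measurable]: "{\<omega>\<in>space M. records_below b D (\<lambda>i. \<eta> i \<omega>)} \<in> events"
    "{\<omega>\<in>space M. gap_chain b D (\<lambda>i. \<eta> i \<omega>)} \<in> events" "\<eta> (j D) \<in> borel_measurable M"
    using D j_pos[of D] by auto
  have "emeasure M {\<omega>\<in>space M. records_below b (Suc D) (\<lambda>i. \<eta> i \<omega>)}
      = ennreal (1 / real (gap (Suc D)))
          * (\<integral>\<^sup>+\<omega>. indicator {\<omega>\<in>space M. records_below b D (\<lambda>i. \<eta> i \<omega>)} \<omega> * ?\<psi> (\<eta> (j D) \<omega>) \<partial>M)"
    using D b by (rule emeasure_records_below_Suc)
  also have "(\<integral>\<^sup>+\<omega>. indicator {\<omega>\<in>space M. records_below b D (\<lambda>i. \<eta> i \<omega>)} \<omega> * ?\<psi> (\<eta> (j D) \<omega>) \<partial>M)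
      = ennreal c * (\<integral>\<^sup>+\<omega>. indicator {\<omega>\<in>space M. gap_chain b D (\<lambda>i. \<eta> i \<omega>)} \<omega>
          * ?\<psi> (\<eta> D \<omega> / real (gap D)) \<partial>M)"
  proof (rule nn_integral_indicator_comp_eq_of_cdf_eq)
    show "AE \<omega> in M. \<eta> D \<omega> / real (gap D) \<le> 0"
      using AE_eta_nonpos[OF D(1)] by eventually_elim (simp add: divide_nonpos_nonneg)
  qed (use cdf D AE_eta_j_nonpos[of D] in auto)
  also have "(\<integral>\<^sup>+\<omega>. indicator {\<omega>\<in>space M. gap_chain b D (\<lambda>i. \<eta> i \<omega>)} \<omega> * ?\<psi> (\<eta> D \<omega> / real (gap D)) \<partial>M)
      = emeasure M {\<omega>\<in>space M. gap_chain b (Suc D) (\<lambda>i. \<eta> i \<omega>)}"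
    using D b by (rule emeasure_gap_chain_Suc[symmetric])
  finally show ?thesis
    using c by (simp add: mult.assoc[symmetric] ennreal_mult'[symmetric])
qed

lemma emeasure_records_below_eq_gap_chain:
  assumes "1 \<le> D"
  shows "D \<le> d \<Longrightarrow> (\<And>m. m \<in> {1..D} \<Longrightarrow> b m \<le> 0) \<Longrightarrow>
    emeasure M {\<omega>\<in>space M. records_below b D (\<lambda>i. \<eta> i \<omega>)}
      = ennreal (1 / (\<Prod>m=1..D. real (gap m))) * emeasure M {\<omega>\<in>space M. gap_chain b D (\<lambda>i. \<eta> i \<omega>)}"
  using assms
proof (induction D arbitrary: b rule: nat_induct_at_least)
  case base
  then have b1: "b 1 \<le> 0" by simp
  show ?case
    unfolding emeasure_records_below_1[of b, OF b1] emeasure_gap_chain_1[of b, OF b1]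
    by (simp add: gap_def j0 ennreal_mult'[symmetric])
next
  case (Suc D)
  have D: "1 \<le> D" "Suc D \<le> d" using Suc by auto
  text \<open>Lowering the last bound to \<open>t\<close> turns the induction hypothesis into an identity of
    distribution functions.\<close>
  have "emeasure M ({\<omega>\<in>space M. records_below b D (\<lambda>i. \<eta> i \<omega>)} \<inter> {\<omega>\<in>space M. \<eta> (j D) \<omega> \<le> t})
      = ennreal (1 / (\<Prod>m=1..D. real (gap m))) * emeasure M ({\<omega>\<in>space M. gap_chain b D (\<lambda>i. \<eta> i \<omega>)}
          \<inter> {\<omega>\<in>space M. \<eta> D \<omega> / real (gap D) \<le> t})" if "t \<le> 0" for t
  proof -
    have "{\<omega>\<in>space M. records_below b D (\<lambda>i. \<eta> i \<omega>)} \<inter> {\<omega>\<in>space M. \<eta> (j D) \<omega> \<le> t}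
        = {\<omega>\<in>space M. records_below (b(D := min (b D) t)) D (\<lambda>i. \<eta> i \<omega>)}"
      using D by (auto simp: records_below_update_last)
    moreover have "{\<omega>\<in>space M. gap_chain b D (\<lambda>i. \<eta> i \<omega>)} \<inter> {\<omega>\<in>space M. \<eta> D \<omega> / real (gap D) \<le> t}
        = {\<omega>\<in>space M. gap_chain (b(D := min (b D) t)) D (\<lambda>i. \<eta> i \<omega>)}"
      by (auto simp: gap_chain_update_last)
    moreover have "(b(D := min (b D) t)) m \<le> 0" if "m \<in> {1..D}" for m
      using Suc.prems(2)[of m] that by auto
    ultimately show ?thesis
      using Suc.IH[of "b(D := min (b D) t)"] D by (simp only: Suc_leD)
  qed
  then have "emeasure M {\<omega>\<in>space M. records_below b (Suc D) (\<lambda>i. \<eta> i \<omega>)}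
      = ennreal (1 / (\<Prod>m=1..D. real (gap m)) / real (gap (Suc D)))
        * emeasure M {\<omega>\<in>space M. gap_chain b (Suc D) (\<lambda>i. \<eta> i \<omega>)}"
    using D Suc.prems(2)
    by (intro emeasure_records_below_Suc_eq_gap_chain_Suc) (auto intro!: divide_nonneg_nonneg prod_nonneg)
  then show ?case by (simp add: prod.nat_ivl_Suc' mult.commute)
qed

text \<open>The bounds \<open>0\<close> at the earlier times hold almost surely, so this is the distribution
  function of \<open>\<eta> (j D)\<close> on the record event.\<close>
lemma emeasure_records_last_below:
  assumes "1 \<le> D"
  shows "D \<le> d \<Longrightarrow> t \<le> 0 \<Longrightarrow>
    emeasure M {\<omega>\<in>space M. records_below ((\<lambda>_. 0)(D := t)) D (\<lambda>i. \<eta> i \<omega>)}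
      = ennreal (exp (real (j D) * t) / (\<Prod>m=1..D. real (j m)))"
  using assms
proof (induction D arbitrary: t rule: nat_induct_at_least)
  case base
  have first: "records_below ((\<lambda>_. 0)(1 := t)) 1 = records_below (\<lambda>_. t) 1"
    by (rule records_below_cong) simp
  show ?case
    unfolding first using emeasure_records_below_1[of "\<lambda>_. t"] base by simp
next
  case (Suc D)
  define K n c where "K = gap (Suc D)" and "n = j D" and "c = 1 / (\<Prod>m=1..D. real (j m))"
  have D: "1 \<le> D" "Suc D \<le> d" and t: "t \<le> 0" using Suc by auto
  have K: "1 \<le> K" and n: "1 \<le> n" and nK: "n + K = j (Suc D)"
    using gap_pos[of "Suc D"] j_pos[of D] j_eq_add_gap[of "Suc D"] D by (auto simp: n_def K_def)
  have c: "c \<ge> 0" unfolding c_def by (intro divide_nonneg_nonneg prod_nonneg) auto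
  have past: "records_below ((\<lambda>_. 0)(Suc D := t)) D = records_below (\<lambda>_. 0) D"
    by (rule records_below_cong) simp
  have [measurable]: "{\<omega>\<in>space M. records_below (\<lambda>_. 0) D (\<lambda>i. \<eta> i \<omega>)} \<in> events"
    "\<eta> (j D) \<in> borel_measurable M"
    using D j_pos[of D] by auto
  have cdf: "emeasure M ({\<omega>\<in>space M. records_below (\<lambda>_. 0) D (\<lambda>i. \<eta> i \<omega>)} \<inter> {\<omega>\<in>space M. \<eta> (j D) \<omega> \<le> s})
      = ennreal (c * exp (real n * s))" if "s \<le> 0" for s
  proof -
    have "records_below ((\<lambda>_. 0)(D := s)) D a \<longleftrightarrow> records_below (\<lambda>_. 0) D a \<and> a (j D) \<le> s" for a
      using records_below_update_last[OF D(1), of "\<lambda>_. 0" s a] that by (simp add: min_absorb2)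
    then have "{\<omega>\<in>space M. records_below (\<lambda>_. 0) D (\<lambda>i. \<eta> i \<omega>)} \<inter> {\<omega>\<in>space M. \<eta> (j D) \<omega> \<le> s}
        = {\<omega>\<in>space M. records_below ((\<lambda>_. 0)(D := s)) D (\<lambda>i. \<eta> i \<omega>)}"
      by auto
    moreover have "emeasure M {\<omega>\<in>space M. records_below ((\<lambda>_. 0)(D := s)) D (\<lambda>i. \<eta> i \<omega>)}
        = ennreal (exp (real (j D) * s) / (\<Prod>m=1..D. real (j m)))"
      by (rule Suc.IH) (use D that in auto)
    ultimately show ?thesis by (simp add: c_def n_def)
  qed
  have "emeasure M {\<omega>\<in>space M. records_below ((\<lambda>_. 0)(Suc D := t)) (Suc D) (\<lambda>i. \<eta> i \<omega>)}
      = ennreal (1 / real K) * (\<integral>\<^sup>+\<omega>. indicator {\<omega>\<in>space M. records_below (\<lambda>_. 0) D (\<lambda>i. \<eta> i \<omega>)} \<omega>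
           * exp_increment (real K) t (\<eta> (j D) \<omega>) \<partial>M)"
    using emeasure_records_below_Suc[OF D, of "(\<lambda>_. 0)(Suc D := t)"] t by (simp add: past K_def)
  also have "\<dots> = ennreal (c * exp (real (n + K) * t) / real (n + K))"
    using AE_eta_j_nonpos[of D] D n K t c cdf unfolding n_def
    by (intro nn_integral_increment_of_exp_cdf) auto
  also have "\<dots> = ennreal (exp (real (j (Suc D)) * t) / (\<Prod>m=1..Suc D. real (j m)))"
    by (simp add: nK c_def prod.nat_ivl_Suc')
  finally show ?case .
qed

lemma measure_records_below:
  assumes "\<And>m. m \<in> {1..d} \<Longrightarrow> b m \<le> 0"
  shows "measure M {\<omega>\<in>space M. records_below b d (\<lambda>i. \<eta> i \<omega>)}
       = measure M {\<omega>\<in>space M. gap_chain b d (\<lambda>i. \<eta> i \<omega>)} / (\<Prod>m=1..d. real (gap m))"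
proof -
  have "0 \<le> 1 / (\<Prod>m=1..d. real (gap m))" by (intro divide_nonneg_nonneg prod_nonneg) auto
  then show ?thesis
    using emeasure_records_below_eq_gap_chain[OF d order.refl assms]
    by (simp add: emeasure_eq_measure ennreal_mult'[symmetric])
qed

lemma sets_all_records: "{\<omega>\<in>space M. \<forall>m\<in>{1..d}. is_record \<eta> (j m) \<omega>} \<in> events"
proof -
  let ?v = "\<lambda>\<omega>. restrict (\<lambda>i. \<eta> i \<omega>) {1..j d}"
  have "is_record \<eta> (j m) \<omega> \<longleftrightarrow> (\<forall>i\<in>{1..<j m}. ?v \<omega> i < ?v \<omega> (j m))" if "m \<in> {1..d}" for m \<omega>
    using that j_le[of m d] j_pos[of m] unfolding is_record_def by (intro ball_cong) auto
  then have "{\<omega>\<in>space M. \<forall>m\<in>{1..d}. is_record \<eta> (j m) \<omega>}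
      = {\<omega>\<in>space M. (\<lambda>a. \<forall>m\<in>{1..d}. \<forall>i\<in>{1..<j m}. a i < a (j m)) (?v \<omega>)}"
    by (intro Collect_cong conj_cong refl ball_cong) simp_all
  also have "\<dots> \<in> events" by measurable
  finally show ?thesis .
qed

lemma measure_all_records:
  "measure M {\<omega>\<in>space M. \<forall>m\<in>{1..d}. is_record \<eta> (j m) \<omega>} = 1 / (\<Prod>m=1..d. real (j m))"
proof -
  have "AE \<omega> in M. \<forall>m\<in>{1..d}. \<eta> (j m) \<omega> \<le> 0"
    by (intro AE_finite_allI AE_eta_j_nonpos) auto
  then have "AE \<omega> in M. (\<omega> \<in> {\<omega>\<in>space M. \<forall>m\<in>{1..d}. is_record \<eta> (j m) \<omega>})
      = (\<omega> \<in> {\<omega>\<in>space M. records_below ((\<lambda>_. 0)(d := 0)) d (\<lambda>i. \<eta> i \<omega>)})"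
    by eventually_elim (auto simp: records_below_def is_record_def)
  then have "measure M {\<omega>\<in>space M. \<forall>m\<in>{1..d}. is_record \<eta> (j m) \<omega>}
      = measure M {\<omega>\<in>space M. records_below ((\<lambda>_. 0)(d := 0)) d (\<lambda>i. \<eta> i \<omega>)}"
    using sets_all_records sets_records_below[of d] by (intro measure_eq_AE) auto
  also have "\<dots> = 1 / (\<Prod>m=1..d. real (j m))"
    using emeasure_records_last_below[OF d order.refl order.refl]
    by (simp add: emeasure_eq_measure prod_nonneg)
  finally show ?thesis .
qed

lemma gap_chain_iff:
  "gap_chain b d a \<longleftrightarrow>
     (\<forall>m\<in>{1..<d}. a m / real (j m - j (m - 1)) \<le> b m
        \<and> real (j (m + 1) - j m) * a m / real (j m - j (m - 1)) < a (m + 1))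
     \<and> a d / real (j d - j (d - 1)) \<le> b d"
proof -
  have "a m / real (gap m) < a (Suc m) / real (gap (Suc m))
      \<longleftrightarrow> real (gap (Suc m)) * a m / real (gap m) < a (Suc m)" if "m \<in> {1..<d}" for m
    using gap_pos[of "Suc m"] that by (simp add: pos_less_divide_eq mult.commute)
  then show ?thesis
    unfolding gap_chain_def by (auto simp: gap_def cong: ball_cong)
qed

lemma prod_j_div_prod_gap:
  "(\<Prod>m=1..d. real (j m)) / (\<Prod>m=1..d. real (gap m))
     = (\<Prod>m=2..d. real (j m)) / (\<Prod>m=2..d. real (j m - j (m - 1)))"
proof -
  have first: "(\<Prod>m=1..d. f m) = f 1 * (\<Prod>m=2..d. f m)" for f :: "nat \<Rightarrow> real"
    using d by (subst prod.atLeast_Suc_atMost) (auto simp: numeral_2_eq_2)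
  have "real (j 1) > 0" using j_pos[of 1] d by simp
  then show ?thesis unfolding first by (simp add: gap_def j0)
qed

end

theorem lemma6:
  fixes M :: "'a measure" and \<eta> :: "nat \<Rightarrow> 'a \<Rightarrow> real"
    and d :: nat and j :: "nat \<Rightarrow> nat" and x :: "nat \<Rightarrow> real"
  assumes "prob_space M"
    and rv: "\<And>i. i \<ge> 1 \<Longrightarrow> \<eta> i \<in> borel_measurable M"
    and indep: "prob_space.indep_vars M (\<lambda>_. borel) \<eta> {1..}"
    and distr: "\<And>i t. i \<ge> 1 \<Longrightarrow> t \<le> 0 \<Longrightarrow> measure M {\<omega> \<in> space M. \<eta> i \<omega> \<le> t} = exp t"
    and d: "d \<ge> 1"
    and j0: "j 0 = 0"
    and jmono: "strict_mono_on {0..d} j"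
    and x: "\<And>m. m \<in> {1..d} \<Longrightarrow> x m \<le> 0"
  shows "cond_prob M (\<lambda>\<omega>. \<forall>m\<in>{1..d}. \<eta> (j m) \<omega> \<le> x m)
                     (\<lambda>\<omega>. \<forall>m\<in>{1..d}. is_record \<eta> (j m) \<omega>)
       = (\<Prod>m=2..d. real (j m)) / (\<Prod>m=2..d. real (j m - j (m - 1)))
         * measure M {\<omega> \<in> space M.
              (\<forall>m\<in>{1..<d}. \<eta> m \<omega> / real (j m - j (m - 1)) \<le> x m
                 \<and> real (j (m + 1) - j m) * \<eta> m \<omega> / real (j m - j (m - 1)) < \<eta> (m + 1) \<omega>)
              \<and> \<eta> d \<omega> / real (j d - j (d - 1)) \<le> x d}"
proof -
  interpret neg_exp_records M \<eta> d j
    using assms by (intro neg_exp_records.intro neg_exp_iid.intro neg_exp_iid_axioms.intro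
        neg_exp_records_axioms.intro) auto
  have numerator: "{\<omega>\<in>space M. (\<forall>m\<in>{1..d}. \<eta> (j m) \<omega> \<le> x m) \<and> (\<forall>m\<in>{1..d}. is_record \<eta> (j m) \<omega>)}
      = {\<omega>\<in>space M. records_below x d (\<lambda>i. \<eta> i \<omega>)}"
    by (auto simp: records_below_def is_record_def)
  have chain: "{\<omega> \<in> space M.
        (\<forall>m\<in>{1..<d}. \<eta> m \<omega> / real (j m - j (m - 1)) \<le> x m
           \<and> real (j (m + 1) - j m) * \<eta> m \<omega> / real (j m - j (m - 1)) < \<eta> (m + 1) \<omega>)
        \<and> \<eta> d \<omega> / real (j d - j (d - 1)) \<le> x d} = {\<omega>\<in>space M. gap_chain x d (\<lambda>i. \<eta> i \<omega>)}"
    by (simp add: gap_chain_iff)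
  have "0 < (\<Prod>m=1..d. real (j m))" "0 < (\<Prod>m=1..d. real (gap m))"
    using j_pos gap_pos by (auto intro!: prod_pos simp: Suc_le_eq)
  moreover have "measure M {\<omega>\<in>space M. records_below x d (\<lambda>i. \<eta> i \<omega>)}
      = measure M {\<omega>\<in>space M. gap_chain x d (\<lambda>i. \<eta> i \<omega>)} / (\<Prod>m=1..d. real (gap m))"
    using x by (rule measure_records_below)
  ultimately show ?thesis
    unfolding cond_prob_def numerator chain measure_all_records prod_j_div_prod_gap[symmetric]
    by simp
qed

end
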